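(* For every $g\ge 1$ and every degree value $d$ occurring in $\mathcal{H}_g$, $k_{\rm nn}(d)=g+1$.
   Context: $\mathcal{H}_1$ is the 4-cycle. For $g>1$, $\mathcal{H}_g$ is obtained from $\mathcal{H}_{g-1}$ by keeping every edge $\{u,v\}$ and adding two new vertices $w,w'$ with edges $\{u,w\},\{w,w'\},\{w',v\}$. For a degree value $d$, $k_{\rm nn}(d)$ is the total degree of all neighbors of all vertices of degree $d$ (summed over each such vertex and each of its neighbors) divided by the total degree of the vertices of degree $d$; i.e. the average degree of the nearest neighbors of vertices of degree $d$. *)

theory Defs
  imports Complex_Main
begin

text \<open>Vertices: the four vertices of the initial 4-cycle, and the two new vertices
  created in generation g on the (old) edge {u,v}: Mid g u v is the one adjacent
  to u, Mid g v u the one adjacent to v.\<close>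
datatype vtx = Orig nat | Mid nat vtx vtx

text \<open>The graph is represented by its symmetric adjacency relation (set of ordered
  pairs; each undirected edge appears in both orientations).\<close>
definition cycle4 :: "(vtx \<times> vtx) set" where
  "cycle4 = {(Orig i, Orig ((i + 1) mod 4)) | i. i < 4}
          \<union> {(Orig ((i + 1) mod 4), Orig i) | i. i < 4}"

definition grow :: "nat \<Rightarrow> (vtx \<times> vtx) set \<Rightarrow> (vtx \<times> vtx) set" where
  "grow g E = E
     \<union> {(u, Mid g u v) | u v. (u, v) \<in> E}
     \<union> {(Mid g u v, u) | u v. (u, v) \<in> E}
     \<union> {(Mid g u v, Mid g v u) | u v. (u, v) \<in> E}"

fun H :: "nat \<Rightarrow> (vtx \<times> vtx) set" where
  "H 0 = {}"
| "H (Suc 0) = cycle4"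
| "H (Suc (Suc n)) = grow (Suc (Suc n)) (H (Suc n))"

definition verts :: "nat \<Rightarrow> vtx set" where
  "verts g = fst ` H g"

definition deg :: "nat \<Rightarrow> vtx \<Rightarrow> nat" where
  "deg g v = card {w. (v, w) \<in> H g}"

definition knn :: "nat \<Rightarrow> nat \<Rightarrow> real" where
  "knn g d =
     (\<Sum>v\<in>{v \<in> verts g. deg g v = d}. \<Sum>w\<in>{w. (v, w) \<in> H g}. real (deg g w))
     / (\<Sum>v\<in>{v \<in> verts g. deg g v = d}. real (deg g v))"

end

theory Submission
  imports Defs
begin

text \<open>Let the birth of a vertex be the generation in which it appears. The proof is an
  induction on g with the invariant that in \<H>_g a vertex of birth t has degree 2^(g+1-t)
  (so degree classes are exactly birth layers) and that every birth layer L satisfies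
  \<Sum>_{v\<in>L} S(v) = (g+1) \<Sum>_{v\<in>L} deg(v), where S(v) is the sum of the degrees of the
  neighbours of v. One growth step doubles all old degrees and gives the new vertices degree 2,
  so S becomes 2S + 2deg on old vertices, which preserves the ratio layer by layer with g+2
  in place of g+1. The new vertex next to u has S = 2deg(u) + 2; summed over all edges this is
  2\<Sum>deg^2 + 2\<Sum>deg, and since \<Sum>deg^2 = \<Sum>S (each edge is counted from both ends) the
  invariant turns it into (g+2) times the new layer's degree sum 2\<Sum>deg.\<close>

definition nbrs :: "('a \<times> 'a) set \<Rightarrow> 'a \<Rightarrow> 'a set" where
  "nbrs E v = {w. (v, w) \<in> E}"

definition vdeg :: "('a \<times> 'a) set \<Rightarrow> 'a \<Rightarrow> nat" where
  "vdeg E v = card (nbrs E v)"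

definition nbr_deg_sum :: "('a \<times> 'a) set \<Rightarrow> 'a \<Rightarrow> nat" where
  "nbr_deg_sum E v = (\<Sum>w\<in>nbrs E v. vdeg E w)"

lemma finite_nbrs: "finite E \<Longrightarrow> finite (nbrs E v)"
  by (rule finite_subset[of _ "snd ` E"]) (force simp: nbrs_def)+

lemma nbrs_subset_fst: "sym E \<Longrightarrow> nbrs E v \<subseteq> fst ` E"
  by (force simp: nbrs_def dest: symD)

lemma nbr_deg_sum_regular:
  assumes "sym E" and "\<forall>w\<in>fst ` E. vdeg E w = k"
  shows "nbr_deg_sum E v = k * vdeg E v"
proof -
  have "nbr_deg_sum E v = (\<Sum>w\<in>nbrs E v. k)"
    unfolding nbr_deg_sum_def using nbrs_subset_fst[OF assms(1)] assms(2) by (intro sum.cong) auto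
  then show ?thesis by (simp add: vdeg_def)
qed

lemma sum_nbrs_eq_sum_edges:
  assumes "finite E"
  shows "(\<Sum>v\<in>fst ` E. \<Sum>w\<in>nbrs E v. h v w) = (\<Sum>(v, w)\<in>E. h v w)"
proof -
  have "Sigma (fst ` E) (nbrs E) = E" by (force simp: nbrs_def)
  moreover have "(\<Sum>v\<in>fst ` E. \<Sum>w\<in>nbrs E v. h v w) = (\<Sum>(v, w)\<in>Sigma (fst ` E) (nbrs E). h v w)"
    by (rule sum.Sigma) (auto simp: assms finite_nbrs)
  ultimately show ?thesis by simp
qed

lemma sum_edges_fst:
  assumes "finite E"
  shows "(\<Sum>(v, w)\<in>E. f v) = (\<Sum>v\<in>fst ` E. vdeg E v * f v)"
  using sum_nbrs_eq_sum_edges[OF assms, of "\<lambda>v w. f v"] by (simp add: vdeg_def)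

lemma sum_nbr_deg_sum_eq_sum_square_vdeg:
  assumes "finite E" and "sym E"
  shows "(\<Sum>v\<in>fst ` E. nbr_deg_sum E v) = (\<Sum>v\<in>fst ` E. vdeg E v ^ 2)"
proof -
  have swap: "prod.swap ` E = E" using \<open>sym E\<close> by (force dest: symD)
  have "(\<Sum>v\<in>fst ` E. nbr_deg_sum E v) = (\<Sum>(v, w)\<in>E. vdeg E w)"
    unfolding nbr_deg_sum_def by (rule sum_nbrs_eq_sum_edges[OF assms(1)])
  also have "\<dots> = (\<Sum>(v, w)\<in>prod.swap ` E. vdeg E v)"
    by (subst sum.reindex) (auto simp: case_prod_beta)
  also have "\<dots> = (\<Sum>v\<in>fst ` E. vdeg E v ^ 2)"
    unfolding swap sum_edges_fst[OF assms(1)] by (simp add: power2_eq_square)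
  finally show ?thesis .
qed

lemma sum_proportional_on_fibres:
  fixes f h :: "'a \<Rightarrow> 'b::comm_semiring_1"
  assumes "finite A"
    and "\<And>t. (\<Sum>x\<in>{x\<in>A. k x = t}. f x) = c * (\<Sum>x\<in>{x\<in>A. k x = t}. h x)"
  shows "sum f A = c * sum h A"
proof -
  have "sum f A = (\<Sum>t\<in>k ` A. \<Sum>x\<in>{x\<in>A. k x = t}. f x)"
    by (rule sum.group[symmetric]) (auto simp: assms(1))
  also have "\<dots> = c * (\<Sum>t\<in>k ` A. \<Sum>x\<in>{x\<in>A. k x = t}. h x)"
    by (simp add: assms(2) sum_distrib_left)
  also have "(\<Sum>t\<in>k ` A. \<Sum>x\<in>{x\<in>A. k x = t}. h x) = sum h A"
    by (rule sum.group) (auto simp: assms(1))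
  finally show ?thesis .
qed

fun birth :: "vtx \<Rightarrow> nat" where
  "birth (Orig i) = 1"
| "birth (Mid k u v) = k"

lemma Mid_neq_arg: "Mid g v u \<noteq> u"
  by (induction u) auto

lemma fst_grow: "fst ` grow g E = fst ` E \<union> (\<lambda>(u, v). Mid g u v) ` E"
proof
  show "fst ` grow g E \<subseteq> fst ` E \<union> (\<lambda>(u, v). Mid g u v) ` E"
    unfolding grow_def by force
  have "Mid g u v \<in> fst ` grow g E" if "(u, v) \<in> E" for u v
    using that by (force simp: grow_def intro: image_eqI[of _ fst "(Mid g u v, u)"])
  then show "fst ` E \<union> (\<lambda>(u, v). Mid g u v) ` E \<subseteq> fst ` grow g E"
    by (force simp: grow_def)
qed

lemma finite_grow: "finite E \<Longrightarrow> finite (grow g E)"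
proof -
  assume "finite E"
  moreover have "grow g E = E \<union> (\<lambda>(u, v). (u, Mid g u v)) ` E \<union> (\<lambda>(u, v). (Mid g u v, u)) ` E
      \<union> (\<lambda>(u, v). (Mid g u v, Mid g v u)) ` E"
    unfolding grow_def by force
  ultimately show ?thesis by simp
qed

lemma sym_grow: "sym E \<Longrightarrow> sym (grow g E)"
  unfolding grow_def by (rule symI) (auto dest: symD)

lemma nbrs_grow_old: "birth x \<noteq> g \<Longrightarrow> nbrs (grow g E) x = nbrs E x \<union> Mid g x ` nbrs E x"
  by (auto simp: nbrs_def grow_def)

lemma nbrs_grow_Mid:
  assumes "\<forall>v\<in>fst ` E. birth v < g" and "(u, v) \<in> E"
  shows "nbrs (grow g E) (Mid g u v) = {u, Mid g v u}"
proof -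
  have "(Mid g u v, w) \<notin> E" for w using assms(1) by force
  then show ?thesis using assms(2) by (auto simp: nbrs_def grow_def)
qed

lemma vdeg_grow_old:
  assumes "finite E" "sym E" "\<forall>v\<in>fst ` E. birth v < g" and "birth x \<noteq> g"
  shows "vdeg (grow g E) x = 2 * vdeg E x"
proof -
  have "Mid g x w \<notin> nbrs E x" for w
    using assms(2,3) by (force simp: nbrs_def dest: symD)
  then have "nbrs E x \<inter> Mid g x ` nbrs E x = {}" by blast
  moreover have "inj_on (Mid g x) (nbrs E x)" by (simp add: inj_on_def)
  ultimately show ?thesis
    unfolding vdeg_def nbrs_grow_old[OF assms(4)]
    by (simp add: card_Un_disjoint finite_nbrs[OF assms(1)] card_image)
qed

lemma vdeg_grow_Mid:
  assumes "\<forall>v\<in>fst ` E. birth v < g" and "(u, v) \<in> E"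
  shows "vdeg (grow g E) (Mid g u v) = 2"
  unfolding vdeg_def nbrs_grow_Mid[OF assms] using Mid_neq_arg[of g v u] by simp

lemma nbr_deg_sum_grow_old:
  assumes "finite E" "sym E" "\<forall>v\<in>fst ` E. birth v < g" and "x \<in> fst ` E"
  shows "nbr_deg_sum (grow g E) x = 2 * nbr_deg_sum E x + 2 * vdeg E x"
proof -
  let ?E' = "grow g E"
  have nbrs_old: "w \<in> fst ` E" if "w \<in> nbrs E x" for w
    using that nbrs_subset_fst[OF \<open>sym E\<close>] by blast
  have "birth x \<noteq> g" using assms(3,4) by auto
  have "Mid g x w \<notin> nbrs E x" for w
    using nbrs_old assms(3) by fastforce
  then have disj: "nbrs E x \<inter> Mid g x ` nbrs E x = {}" by blast
  have "nbr_deg_sum ?E' x = (\<Sum>w\<in>nbrs E x. vdeg ?E' w) + (\<Sum>w\<in>Mid g x ` nbrs E x. vdeg ?E' w)"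
    unfolding nbr_deg_sum_def nbrs_grow_old[OF \<open>birth x \<noteq> g\<close>]
    by (rule sum.union_disjoint) (auto simp: finite_nbrs[OF assms(1)] disj)
  also have "(\<Sum>w\<in>nbrs E x. vdeg ?E' w) = (\<Sum>w\<in>nbrs E x. 2 * vdeg E w)"
    using nbrs_old assms(3) by (intro sum.cong) (auto intro: vdeg_grow_old[OF assms(1-3)])
  also have "(\<Sum>w\<in>Mid g x ` nbrs E x. vdeg ?E' w) = (\<Sum>w\<in>nbrs E x. vdeg ?E' (Mid g x w))"
    by (simp add: sum.reindex inj_on_def)
  also have "\<dots> = (\<Sum>w\<in>nbrs E x. 2)"
    by (intro sum.cong) (auto simp: nbrs_def intro: vdeg_grow_Mid[OF assms(3)])
  finally show ?thesis by (simp add: nbr_deg_sum_def vdeg_def sum_distrib_left)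
qed

lemma nbr_deg_sum_grow_Mid:
  assumes "finite E" "sym E" "\<forall>v\<in>fst ` E. birth v < g" and "(u, v) \<in> E"
  shows "nbr_deg_sum (grow g E) (Mid g u v) = 2 * vdeg E u + 2"
proof -
  have "birth u \<noteq> g" using assms(3,4) by force
  moreover have "vdeg (grow g E) (Mid g v u) = 2"
    using assms(2-4) by (auto intro: vdeg_grow_Mid dest: symD)
  ultimately show ?thesis
    unfolding nbr_deg_sum_def nbrs_grow_Mid[OF assms(3,4)]
    using vdeg_grow_old[OF assms(1-3)] Mid_neq_arg[of g v u] by simp
qed

definition birth_layer :: "(vtx \<times> vtx) set \<Rightarrow> nat \<Rightarrow> vtx set" where
  "birth_layer E t = {v \<in> fst ` E. birth v = t}"

definition layered :: "nat \<Rightarrow> (vtx \<times> vtx) set \<Rightarrow> bool" where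
  "layered m E \<longleftrightarrow> finite E \<and> sym E \<and>
     (\<forall>v\<in>fst ` E. birth v \<le> m \<and> vdeg E v = 2 ^ (m + 1 - birth v)) \<and>
     (\<forall>t. (\<Sum>v\<in>birth_layer E t. nbr_deg_sum E v) = (m + 1) * (\<Sum>v\<in>birth_layer E t. vdeg E v))"

lemma layered_sum_square_vdeg:
  assumes "layered m E"
  shows "(\<Sum>v\<in>fst ` E. vdeg E v ^ 2) = (m + 1) * (\<Sum>v\<in>fst ` E. vdeg E v)"
proof -
  have "finite E" "sym E" using assms by (simp_all add: layered_def)
  have "(\<Sum>v\<in>fst ` E. nbr_deg_sum E v) = (m + 1) * (\<Sum>v\<in>fst ` E. vdeg E v)"
    by (rule sum_proportional_on_fibres[where k = birth])
      (use assms in \<open>simp_all add: layered_def birth_layer_def\<close>)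
  then show ?thesis
    using sum_nbr_deg_sum_eq_sum_square_vdeg[OF \<open>finite E\<close> \<open>sym E\<close>] by simp
qed

lemma layered_grow_new_layer:
  assumes "layered m E"
  defines "E' \<equiv> grow (Suc m) E" and "M \<equiv> (\<lambda>(u, v). Mid (Suc m) u v) ` E"
  shows "(\<Sum>v\<in>M. nbr_deg_sum E' v) = (Suc m + 1) * (\<Sum>v\<in>M. vdeg E' v)"
proof -
  have fin: "finite E" and "sym E" and born: "\<forall>v\<in>fst ` E. birth v < Suc m"
    using assms(1) by (auto simp: layered_def)
  have inj: "inj_on (\<lambda>(u, v). Mid (Suc m) u v) E" by (auto simp: inj_on_def)
  have "(\<Sum>v\<in>M. nbr_deg_sum E' v) = (\<Sum>(u, v)\<in>E. 2 * vdeg E u + 2)"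
    unfolding M_def E'_def sum.reindex[OF inj]
    by (intro sum.cong) (auto simp: nbr_deg_sum_grow_Mid[OF fin \<open>sym E\<close> born])
  also have "\<dots> = 2 * (\<Sum>u\<in>fst ` E. vdeg E u ^ 2) + 2 * (\<Sum>u\<in>fst ` E. vdeg E u)"
    unfolding sum_edges_fst[OF fin]
    by (simp add: power2_eq_square distrib_left sum.distrib sum_distrib_left mult.left_commute)
  also have "\<dots> = (Suc m + 1) * (2 * (\<Sum>u\<in>fst ` E. vdeg E u))"
    unfolding layered_sum_square_vdeg[OF assms(1)] by simp
  also have "2 * (\<Sum>u\<in>fst ` E. vdeg E u) = (\<Sum>(u, v)\<in>E. 2)"
    unfolding sum_edges_fst[OF fin] by (simp add: sum_distrib_left mult.commute)
  also have "\<dots> = (\<Sum>v\<in>M. vdeg E' v)"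
    unfolding M_def E'_def sum.reindex[OF inj]
    by (intro sum.cong) (auto simp: vdeg_grow_Mid[OF born])
  finally show ?thesis .
qed

lemma birth_layer_grow:
  assumes "\<forall>v\<in>fst ` E. birth v < g"
  shows "birth_layer (grow g E) t = (if t = g then (\<lambda>(u, v). Mid g u v) ` E else birth_layer E t)"
  using assms unfolding birth_layer_def fst_grow by force

lemma layered_grow:
  assumes "layered m E"
  shows "layered (Suc m) (grow (Suc m) E)"
proof -
  let ?E' = "grow (Suc m) E"
  have fin: "finite E" and "sym E"
    and deg: "\<forall>v\<in>fst ` E. birth v \<le> m \<and> vdeg E v = 2 ^ (m + 1 - birth v)"
    and layers: "\<And>t. (\<Sum>v\<in>birth_layer E t. nbr_deg_sum E v)
                     = (m + 1) * (\<Sum>v\<in>birth_layer E t. vdeg E v)"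
    using assms by (auto simp: layered_def)
  have born: "\<forall>v\<in>fst ` E. birth v < Suc m" using deg by auto
  have vdeg_old: "vdeg ?E' v = 2 * vdeg E v" if "v \<in> fst ` E" for v
    using that born vdeg_grow_old[OF fin \<open>sym E\<close> born] by fastforce
  have deg': "birth v \<le> Suc m \<and> vdeg ?E' v = 2 ^ (Suc m + 1 - birth v)" if v: "v \<in> fst ` ?E'" for v
  proof (cases "v \<in> fst ` E")
    case True
    with deg have "Suc m + 1 - birth v = Suc (m + 1 - birth v)" by auto
    with True deg show ?thesis using vdeg_old by auto
  next
    case False
    then obtain u w where "(u, w) \<in> E" "v = Mid (Suc m) u w" using v by (auto simp: fst_grow)
    then show ?thesis using vdeg_grow_Mid[OF born] by simp
  qed
  have layers': "(\<Sum>v\<in>birth_layer ?E' t. nbr_deg_sum ?E' v)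
                  = (Suc m + 1) * (\<Sum>v\<in>birth_layer ?E' t. vdeg ?E' v)" for t
  proof (cases "t = Suc m")
    case True
    then show ?thesis using layered_grow_new_layer[OF assms] birth_layer_grow[OF born] by simp
  next
    case False
    have old: "v \<in> fst ` E" if "v \<in> birth_layer E t" for v
      using that by (simp add: birth_layer_def)
    have "(\<Sum>v\<in>birth_layer E t. nbr_deg_sum ?E' v)
          = (\<Sum>v\<in>birth_layer E t. 2 * nbr_deg_sum E v + 2 * vdeg E v)"
      using old by (intro sum.cong) (auto intro: nbr_deg_sum_grow_old[OF fin \<open>sym E\<close> born])
    also have "\<dots> = (Suc m + 1) * (\<Sum>v\<in>birth_layer E t. 2 * vdeg E v)"
      unfolding sum.distrib sum_distrib_left[symmetric] layers by (simp add: algebra_simps)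
    also have "(\<Sum>v\<in>birth_layer E t. 2 * vdeg E v) = (\<Sum>v\<in>birth_layer E t. vdeg ?E' v)"
      using old by (intro sum.cong) (auto simp: vdeg_old)
    finally show ?thesis using False birth_layer_grow[OF born] by simp
  qed
  show ?thesis
    unfolding layered_def using finite_grow[OF fin] sym_grow[OF \<open>sym E\<close>] deg' layers' by blast
qed

lemma cycle4_eq: "cycle4 = {(Orig 0, Orig 1), (Orig 1, Orig 2), (Orig 2, Orig 3), (Orig 3, Orig 0),
    (Orig 1, Orig 0), (Orig 2, Orig 1), (Orig 3, Orig 2), (Orig 0, Orig 3)}"
proof -
  have less_4: "i < (4::nat) \<longleftrightarrow> i = 0 \<or> i = 1 \<or> i = 2 \<or> i = 3" for i by auto
  show ?thesis unfolding cycle4_def less_4 by auto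
qed

lemma fst_cycle4: "fst ` cycle4 = {Orig 0, Orig 1, Orig 2, Orig 3}"
  unfolding cycle4_eq by auto

lemma nbrs_cycle4:
  "nbrs cycle4 (Orig 0) = {Orig 1, Orig 3}" "nbrs cycle4 (Orig 1) = {Orig 0, Orig 2}"
  "nbrs cycle4 (Orig 2) = {Orig 1, Orig 3}" "nbrs cycle4 (Orig 3) = {Orig 0, Orig 2}"
  by (auto simp: cycle4_eq nbrs_def)

lemma vdeg_cycle4: "v \<in> fst ` cycle4 \<Longrightarrow> vdeg cycle4 v = 2"
  unfolding fst_cycle4 vdeg_def
  by (elim insertE emptyE) (simp_all add: nbrs_cycle4 nbrs_cycle4[simplified])

lemma layered_cycle4: "layered 1 cycle4"
proof -
  have "finite cycle4" and "sym cycle4" unfolding cycle4_eq by (auto intro: symI)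
  moreover have "(\<Sum>v\<in>birth_layer cycle4 t. nbr_deg_sum cycle4 v)
                 = (1 + 1) * (\<Sum>v\<in>birth_layer cycle4 t. vdeg cycle4 v)" for t
    using nbr_deg_sum_regular[OF \<open>sym cycle4\<close>, of 2] vdeg_cycle4
    by (simp add: sum_distrib_left[symmetric])
  moreover have "\<forall>v\<in>fst ` cycle4. birth v \<le> 1 \<and> vdeg cycle4 v = 2 ^ (1 + 1 - birth v)"
    using vdeg_cycle4 unfolding fst_cycle4 by auto
  ultimately show ?thesis unfolding layered_def by blast
qed

lemma layered_H: "1 \<le> g \<Longrightarrow> layered g (H g)"
  by (induction g rule: H.induct) (auto intro: layered_cycle4[unfolded One_nat_def] layered_grow)

lemma layered_vdeg_eq_iff:
  assumes "layered m E" and "v \<in> fst ` E" and "w \<in> fst ` E"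
  shows "vdeg E v = vdeg E w \<longleftrightarrow> birth v = birth w"
proof -
  have "vdeg E v = 2 ^ (m + 1 - birth v)" and "vdeg E w = 2 ^ (m + 1 - birth w)"
    using assms by (auto simp: layered_def)
  then have "vdeg E v = vdeg E w \<longleftrightarrow> m + 1 - birth v = m + 1 - birth w" by simp
  also have "\<dots> \<longleftrightarrow> birth v = birth w" using assms by (auto simp: layered_def)
  finally show ?thesis .
qed

lemma layered_knn_birth_layer:
  assumes "layered m E" and "v \<in> fst ` E"
  shows "real (\<Sum>w\<in>birth_layer E (birth v). nbr_deg_sum E w)
         / real (\<Sum>w\<in>birth_layer E (birth v). vdeg E w) = real m + 1"
proof -
  have "finite (birth_layer E (birth v))"
    using assms(1) by (simp add: layered_def birth_layer_def)
  moreover have "v \<in> birth_layer E (birth v)" "vdeg E v > 0"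
    using assms by (auto simp: birth_layer_def layered_def)
  ultimately have "(\<Sum>w\<in>birth_layer E (birth v). vdeg E w) > 0"
    by (metis gr0I sum_eq_0_iff)
  moreover have "(\<Sum>w\<in>birth_layer E (birth v). nbr_deg_sum E w)
                 = (m + 1) * (\<Sum>w\<in>birth_layer E (birth v). vdeg E w)"
    using assms(1) by (simp add: layered_def)
  ultimately show ?thesis by (simp del: of_nat_sum add: field_simps)
qed

theorem proposition7:
  fixes g d :: nat
  assumes "g \<ge> 1" and "d \<in> deg g ` verts g"
  shows "knn g d = real g + 1"
proof -
  have layered: "layered g (H g)" using layered_H assms(1) .
  have deg_eq: "deg g = vdeg (H g)" by (simp add: fun_eq_iff deg_def vdeg_def nbrs_def)
  obtain v where v: "v \<in> fst ` H g" "d = vdeg (H g) v"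
    using assms(2) by (auto simp: verts_def deg_eq)
  have "{w \<in> verts g. deg g w = d} = birth_layer (H g) (birth v)"
    using layered_vdeg_eq_iff[OF layered _ v(1)] v(2)
    by (auto simp: verts_def deg_eq birth_layer_def)
  then have "knn g d = real (\<Sum>w\<in>birth_layer (H g) (birth v). nbr_deg_sum (H g) w)
                       / real (\<Sum>w\<in>birth_layer (H g) (birth v). vdeg (H g) w)"
    by (simp add: knn_def deg_eq nbr_deg_sum_def nbrs_def)
  also have "\<dots> = real g + 1" using layered_knn_birth_layer[OF layered v(1)] .
  finally show ?thesis .
qed

end
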